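(* Let $N=\{1,\dots,n\}$ and $u:X\to\mathbb{R}$ non-constant affine. Suppose that for each $i\in N$, $\succ_i$ is a Bewley preference on $\mathcal{F}$ with unique representation $(u,C_i)$, and that $\succ_0$ is either a hope-and-prepare preference with unique representation $(u,C_0,C_0)$ or a Bewley preference with unique representation $(u,C_0)$. Then: (i) Pareto (for all $f,g\in\mathcal{F}$, if $f\succ_i g$ for all $i\in N$ then $f\succ_0 g$) holds if and only if $C_0\subseteq\mathrm{co}\left(\bigcup_{i=1}^nC_i\right)$; (ii) Caution for incomparability (for all $f\in\mathcal{F}$, $x\in X$, if there is $i\in N$ with $f\Join_i x$ then $f\Join_0 x$) holds if and only if $\mathrm{co}\left(\bigcup_{i=1}^nC_i\right)\subseteq C_0$. In particular, when both conditions hold, $C_0=\mathrm{co}\left(\bigcup_{i=1}^nC_i\right)$.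
   Context: $S$ is a set of states with algebra $\Sigma$; $X$ is a non-singleton convex subset of a real vector space; $\mathcal{F}$ is the set of simple acts $f:S\to X$; elements of $X$ are identified with constant acts; $\Delta$ is the set of finitely additive probability measures on $(S,\Sigma)$ with weak* topology; $\mathrm{co}(P)$ denotes the convex hull of $P\subseteq\Delta$. A Bewley preference with representation $(u,C)$ ($C\subseteq\Delta$ non-empty convex compact): $f\succ g$ iff $\int u(f)dp>\int u(g)dp$ for all $p\in C$. A hope-and-prepare preference with representation $(u,C,D)$ ($C,D$ convex compact, $C\cap D\ne\emptyset$): $f\succ g$ iff $\min_{p\in C}\int u(f)dp>\min_{p\in C}\int u(g)dp$ and $\max_{p\in D}\int u(f)dp>\max_{p\in D}\int u(g)dp$. Unique representation: sets unique, $u$ unique up to positive affine transformation. $f\Join_i x$ means $f\not\succ_i x$ and $x\not\succ_i f$. *)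

theory Defs
  imports "HOL-Analysis.Analysis"
begin

text \<open>A charge is a function on all subsets, normalised to 0 outside \<Sigma>; the weak* topology
  is rendered as the product topology of (\<open>'a set \<Rightarrow> real\<close>) (pointwise convergence on events),
  which agrees with the weak* topology on the norm-bounded set \<Delta>.\<close>

definition fa_probs :: "'a set set \<Rightarrow> ('a set \<Rightarrow> real) set" where
  "fa_probs \<Sigma> = {p. (\<forall>A\<in>\<Sigma>. 0 \<le> p A) \<and> p UNIV = 1
      \<and> (\<forall>A\<in>\<Sigma>. \<forall>B\<in>\<Sigma>. A \<inter> B = {} \<longrightarrow> p (A \<union> B) = p A + p B)
      \<and> (\<forall>A. A \<notin> \<Sigma> \<longrightarrow> p A = 0)}"

definition fconvex :: "('a set \<Rightarrow> real) set \<Rightarrow> bool" where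
  "fconvex P \<longleftrightarrow> (\<forall>p\<in>P. \<forall>q\<in>P. \<forall>t::real. 0 \<le> t \<and> t \<le> 1 \<longrightarrow> (\<lambda>A. t * p A + (1 - t) * q A) \<in> P)"

definition fconvex_hull :: "('a set \<Rightarrow> real) set \<Rightarrow> ('a set \<Rightarrow> real) set" where
  "fconvex_hull P = \<Inter>{K. P \<subseteq> K \<and> fconvex K}"

definition affine_on :: "'b::real_vector set \<Rightarrow> ('b \<Rightarrow> real) \<Rightarrow> bool" where
  "affine_on X u \<longleftrightarrow> (\<forall>x\<in>X. \<forall>y\<in>X. \<forall>t::real. 0 \<le> t \<and> t \<le> 1 \<longrightarrow>
      u (t *\<^sub>R x + (1 - t) *\<^sub>R y) = t * u x + (1 - t) * u y)"

definition simple_acts :: "'a set set \<Rightarrow> 'b set \<Rightarrow> ('a \<Rightarrow> 'b) set" where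
  "simple_acts \<Sigma> X = {f. finite (range f) \<and> range f \<subseteq> X \<and> (\<forall>y. f -` {y} \<in> \<Sigma>)}"

definition eu :: "('a set \<Rightarrow> real) \<Rightarrow> ('b \<Rightarrow> real) \<Rightarrow> ('a \<Rightarrow> 'b) \<Rightarrow> real" where
  "eu p u f = (\<Sum>y\<in>range f. u y * p (f -` {y}))"

type_synonym ('a,'b) pref = "('a \<Rightarrow> 'b) \<Rightarrow> ('a \<Rightarrow> 'b) \<Rightarrow> bool"

definition bewley_rep :: "'a set set \<Rightarrow> 'b::real_vector set \<Rightarrow> ('a,'b) pref
    \<Rightarrow> ('b \<Rightarrow> real) \<Rightarrow> ('a set \<Rightarrow> real) set \<Rightarrow> bool" where
  "bewley_rep \<Sigma> X pr u C \<longleftrightarrow> affine_on X u \<and> C \<noteq> {} \<and> fconvex C \<and> compact C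
     \<and> C \<subseteq> fa_probs \<Sigma>
     \<and> (\<forall>f\<in>simple_acts \<Sigma> X. \<forall>g\<in>simple_acts \<Sigma> X.
           pr f g \<longleftrightarrow> (\<forall>p\<in>C. eu p u f > eu p u g))"

definition unique_bewley_rep :: "'a set set \<Rightarrow> 'b::real_vector set \<Rightarrow> ('a,'b) pref
    \<Rightarrow> ('b \<Rightarrow> real) \<Rightarrow> ('a set \<Rightarrow> real) set \<Rightarrow> bool" where
  "unique_bewley_rep \<Sigma> X pr u C \<longleftrightarrow> bewley_rep \<Sigma> X pr u C
     \<and> (\<forall>v D. bewley_rep \<Sigma> X pr v D \<longrightarrow>
            D = C \<and> (\<exists>a>0. \<exists>b. \<forall>x\<in>X. v x = a * u x + b))"

definition hp_rep :: "'a set set \<Rightarrow> 'b::real_vector set \<Rightarrow> ('a,'b) pref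
    \<Rightarrow> ('b \<Rightarrow> real) \<Rightarrow> ('a set \<Rightarrow> real) set \<Rightarrow> ('a set \<Rightarrow> real) set \<Rightarrow> bool" where
  "hp_rep \<Sigma> X pr u C D \<longleftrightarrow> affine_on X u
     \<and> fconvex C \<and> compact C \<and> C \<subseteq> fa_probs \<Sigma>
     \<and> fconvex D \<and> compact D \<and> D \<subseteq> fa_probs \<Sigma>
     \<and> C \<inter> D \<noteq> {}
     \<and> (\<forall>f\<in>simple_acts \<Sigma> X. \<forall>g\<in>simple_acts \<Sigma> X.
           pr f g \<longleftrightarrow> ((INF p\<in>C. eu p u f) > (INF p\<in>C. eu p u g)
                       \<and> (SUP p\<in>D. eu p u f) > (SUP p\<in>D. eu p u g)))"

definition unique_hp_rep :: "'a set set \<Rightarrow> 'b::real_vector set \<Rightarrow> ('a,'b) pref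
    \<Rightarrow> ('b \<Rightarrow> real) \<Rightarrow> ('a set \<Rightarrow> real) set \<Rightarrow> ('a set \<Rightarrow> real) set \<Rightarrow> bool" where
  "unique_hp_rep \<Sigma> X pr u C D \<longleftrightarrow> hp_rep \<Sigma> X pr u C D
     \<and> (\<forall>v C' D'. hp_rep \<Sigma> X pr v C' D' \<longrightarrow>
            C' = C \<and> D' = D \<and> (\<exists>a>0. \<exists>b. \<forall>x\<in>X. v x = a * u x + b))"

definition incomp :: "('a,'b) pref \<Rightarrow> ('a \<Rightarrow> 'b) \<Rightarrow> ('a \<Rightarrow> 'b) \<Rightarrow> bool" where
  "incomp pr f g \<longleftrightarrow> \<not> pr f g \<and> \<not> pr g f"

end

theory Submission
  imports Defs
begin

text \<open>
  A hope-and-prepare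
  preference with \<open>C = D\<close> compares acts with constant acts exactly as the Bewley preference
  with priors \<open>C\<close> does, and both kinds of social preference respect strict dominance on their
  priors. Unanimous strict preference of the individuals is strict dominance on the union of
  the \<open>C i\<close>, hence on its convex hull \<open>K\<close>; this gives the easy half of (i). Enlarging a set of
  priors preserves incomparability with constant acts; this gives the easy half of (ii).

  The converses rest on separating a prior \<open>p\<close> from a compact convex set of charges \<open>K\<close> not
  containing it by an act \<open>f\<close> and a constant act \<open>x\<close>: \<open>f\<close> is indifferent to \<open>x\<close> under \<open>p\<close> but
  strictly better under every prior in \<open>K\<close>. By compactness, finitely many events already tell
  every \<open>q \<in> K\<close> apart from \<open>p\<close>; in the projection onto these events the nearest point of \<open>K\<close> to
  \<open>p\<close> yields a separating linear functional; and an act that is constant on the atoms generated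
  by the events, with values on a segment of \<open>X\<close> along which \<open>u\<close> is affine, has a positive
  affine transform of that functional as its expected utility.
\<close>

section \<open>Charges\<close>

lemma fa_probs_empty:
  assumes "algebra UNIV \<Sigma>" and "p \<in> fa_probs \<Sigma>"
  shows "p {} = 0"
proof -
  interpret algebra UNIV \<Sigma> by fact
  have "p ({} \<union> {}) = p {} + p {}" using assms(2) unfolding fa_probs_def by blast
  then show ?thesis by simp
qed

lemma fa_probs_abs_le_1:
  assumes "algebra UNIV \<Sigma>" and p: "p \<in> fa_probs \<Sigma>"
  shows "\<bar>p A\<bar> \<le> 1"
proof (cases "A \<in> \<Sigma>")
  case True
  interpret algebra UNIV \<Sigma> by fact
  have "- A \<in> \<Sigma>" using compl_sets[OF True] by (simp add: Compl_eq_Diff_UNIV)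
  have "1 = p (A \<union> - A)" using p unfolding fa_probs_def by simp
  also have "\<dots> = p A + p (- A)" using p True \<open>- A \<in> \<Sigma>\<close> unfolding fa_probs_def by blast
  finally show ?thesis using p True \<open>- A \<in> \<Sigma>\<close> unfolding fa_probs_def by auto
next
  case False
  then show ?thesis using p unfolding fa_probs_def by auto
qed

lemma fa_probs_UN_disjoint:
  assumes "algebra UNIV \<Sigma>" and p: "p \<in> fa_probs \<Sigma>" and "finite I"
    and "\<And>i. i \<in> I \<Longrightarrow> B i \<in> \<Sigma>"
    and "\<And>i j. i \<in> I \<Longrightarrow> j \<in> I \<Longrightarrow> i \<noteq> j \<Longrightarrow> B i \<inter> B j = {}"
  shows "p (\<Union>i\<in>I. B i) = (\<Sum>i\<in>I. p (B i))"
  using assms(3-)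
proof (induction I rule: finite_induct)
  case empty
  then show ?case using fa_probs_empty[OF assms(1) p] by simp
next
  case (insert i I)
  interpret algebra UNIV \<Sigma> by fact
  have "(\<Union>j\<in>I. B j) \<in> \<Sigma>" "B i \<in> \<Sigma>" "B i \<inter> (\<Union>j\<in>I. B j) = {}"
    using insert by (auto intro!: finite_UN)
  then have "p (B i \<union> (\<Union>j\<in>I. B j)) = p (B i) + p (\<Union>j\<in>I. B j)"
    using p unfolding fa_probs_def by blast
  then show ?case using insert by simp
qed

lemma abs_sum_fa_probs_le:
  assumes "algebra UNIV \<Sigma>" and "p \<in> fa_probs \<Sigma>"
  shows "\<bar>\<Sum>A\<in>F. w A * p A\<bar> \<le> (\<Sum>A\<in>F. \<bar>w A\<bar>)"
proof -
  have "\<bar>\<Sum>A\<in>F. w A * p A\<bar> \<le> (\<Sum>A\<in>F. \<bar>w A\<bar> * \<bar>p A\<bar>)"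
    using sum_abs[of "\<lambda>A. w A * p A" F] by (simp add: abs_mult)
  also have "\<dots> \<le> (\<Sum>A\<in>F. \<bar>w A\<bar>)"
    using fa_probs_abs_le_1[OF assms] by (intro sum_mono) (simp add: mult_left_le)
  finally show ?thesis .
qed

lemma fconvex_fa_probs: "fconvex (fa_probs \<Sigma>)"
  unfolding fconvex_def
proof (intro ballI allI impI)
  fix p q and t :: real
  assume "p \<in> fa_probs \<Sigma>" "q \<in> fa_probs \<Sigma>" "0 \<le> t \<and> t \<le> 1"
  then show "(\<lambda>A. t * p A + (1 - t) * q A) \<in> fa_probs \<Sigma>"
    unfolding fa_probs_def by (auto simp: distrib_left intro!: add_nonneg_nonneg mult_nonneg_nonneg)
qed

section \<open>Convex hulls of sets of charges\<close>

lemma fconvex_fconvex_hull: "fconvex (fconvex_hull P)"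
  unfolding fconvex_def fconvex_hull_def by blast

lemma fconvex_hull_subset: "P \<subseteq> fconvex_hull P"
  unfolding fconvex_hull_def by blast

lemma fconvex_hull_minimal: "P \<subseteq> K \<Longrightarrow> fconvex K \<Longrightarrow> fconvex_hull P \<subseteq> K"
  unfolding fconvex_hull_def by blast

lemma fconvex_hull_eq: "fconvex K \<Longrightarrow> fconvex_hull K = K"
  by (simp add: fconvex_hull_minimal fconvex_hull_subset subset_antisym)

lemma fconvex_hull_mono: "P \<subseteq> Q \<Longrightarrow> fconvex_hull P \<subseteq> fconvex_hull Q"
  using fconvex_hull_subset[of Q] by (intro fconvex_hull_minimal fconvex_fconvex_hull) blast

lemma fconvex_hull_Un_hull: "fconvex_hull (fconvex_hull A \<union> B) = fconvex_hull (A \<union> B)"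
proof
  have "fconvex_hull A \<union> B \<subseteq> fconvex_hull (A \<union> B)"
    using fconvex_hull_mono[of A "A \<union> B"] fconvex_hull_subset[of "A \<union> B"] by blast
  then show "fconvex_hull (fconvex_hull A \<union> B) \<subseteq> fconvex_hull (A \<union> B)"
    by (intro fconvex_hull_minimal fconvex_fconvex_hull)
  show "fconvex_hull (A \<union> B) \<subseteq> fconvex_hull (fconvex_hull A \<union> B)"
    using fconvex_hull_subset[of A] by (intro fconvex_hull_mono) blast
qed

definition fmix :: "('a set \<Rightarrow> real) set \<Rightarrow> ('a set \<Rightarrow> real) set \<Rightarrow> ('a set \<Rightarrow> real) set" where
  "fmix A B = (\<lambda>(t, a, b) E. t * a E + (1 - t) * b E) ` ({0..1} \<times> A \<times> B)"

lemma compact_fmix: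
  assumes "compact A" and "compact B"
  shows "compact (fmix A B)"
  unfolding fmix_def
proof (rule compact_continuous_image)
  show "compact ({0..1::real} \<times> A \<times> B)" using assms by (intro compact_Times) auto
  have "continuous_on UNIV (\<lambda>x :: real \<times> ('a set \<Rightarrow> real) \<times> ('a set \<Rightarrow> real).
          fst x * fst (snd x) E + (1 - fst x) * snd (snd x) E)" for E
    by (intro continuous_intros continuous_on_compose2[OF continuous_on_product_coordinates]) auto
  then show "continuous_on ({0..1} \<times> A \<times> B) (\<lambda>(t, a, b) E. t * a E + (1 - t) * b E)"
    by (auto simp: case_prod_beta intro!: continuous_on_coordinatewise_then_product
        intro: continuous_on_subset)
qed

lemma fconvex_conic_combination:
  assumes "fconvex A" and "a1 \<in> A" and "a2 \<in> A" and "0 \<le> \<alpha>" and "0 \<le> \<beta>"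
  shows "\<exists>a\<in>A. \<forall>E. \<alpha> * a1 E + \<beta> * a2 E = (\<alpha> + \<beta>) * a E"
proof (cases "\<alpha> + \<beta> = 0")
  case True
  then have "\<alpha> = 0" "\<beta> = 0" using assms(4,5) by linarith+
  then show ?thesis using assms(2) by auto
next
  case False
  define s where "s = \<alpha> / (\<alpha> + \<beta>)"
  have "0 \<le> s" "s \<le> 1" unfolding s_def using assms(4,5) False by auto
  then have mem: "(\<lambda>E. s * a1 E + (1 - s) * a2 E) \<in> A"
    using assms(1-3) unfolding fconvex_def by blast
  have "(\<alpha> + \<beta>) * s = \<alpha>" "(\<alpha> + \<beta>) * (1 - s) = \<beta>"
    unfolding s_def using False by (simp_all add: field_simps)
  then have "\<alpha> * a1 E + \<beta> * a2 E = (\<alpha> + \<beta>) * (s * a1 E + (1 - s) * a2 E)" for E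
    by (metis (no_types) distrib_left mult.assoc)
  with mem show ?thesis by (intro bexI[of _ "\<lambda>E. s * a1 E + (1 - s) * a2 E"]) auto
qed

lemma fconvex_fmix:
  assumes A: "fconvex A" and B: "fconvex B"
  shows "fconvex (fmix A B)"
  unfolding fconvex_def
proof (intro ballI allI impI)
  fix p q and s :: real
  assume "p \<in> fmix A B" "q \<in> fmix A B" and s: "0 \<le> s \<and> s \<le> 1"
  then obtain t1 a1 b1 t2 a2 b2 where t: "t1 \<in> {0..1}" "t2 \<in> {0..1}"
    and ab: "a1 \<in> A" "b1 \<in> B" "a2 \<in> A" "b2 \<in> B"
    and pq: "p = (\<lambda>E. t1 * a1 E + (1 - t1) * b1 E)" "q = (\<lambda>E. t2 * a2 E + (1 - t2) * b2 E)"
    unfolding fmix_def by auto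
  define T where "T = s * t1 + (1 - s) * t2"
  have "0 \<le> s * t1" "0 \<le> (1 - s) * t2" "0 \<le> s * (1 - t1)" "0 \<le> (1 - s) * (1 - t2)"
    using s t by auto
  moreover have "s * (1 - t1) + (1 - s) * (1 - t2) = 1 - T" unfolding T_def by algebra
  ultimately obtain a b where "a \<in> A" "b \<in> B"
    and a: "\<And>E. s * t1 * a1 E + (1 - s) * t2 * a2 E = T * a E"
    and b: "\<And>E. s * (1 - t1) * b1 E + (1 - s) * (1 - t2) * b2 E = (1 - T) * b E"
    using fconvex_conic_combination[OF A ab(1,3), of "s * t1" "(1 - s) * t2"]
      fconvex_conic_combination[OF B ab(2,4), of "s * (1 - t1)" "(1 - s) * (1 - t2)"]
    unfolding T_def by metis
  have "T \<in> {0..1}" unfolding T_def using s t by (auto intro: convex_bound_le)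
  moreover have "(\<lambda>E. s * p E + (1 - s) * q E) = (\<lambda>E. T * a E + (1 - T) * b E)"
    unfolding pq a[symmetric] b[symmetric] by (simp add: algebra_simps)
  ultimately show "(\<lambda>E. s * p E + (1 - s) * q E) \<in> fmix A B"
    unfolding fmix_def using \<open>a \<in> A\<close> \<open>b \<in> B\<close> by (auto intro!: image_eqI[of _ _ "(T, a, b)"])
qed

lemma fconvex_hull_Un_eq_fmix:
  assumes A: "fconvex A" and B: "fconvex B" and "A \<noteq> {}" and "B \<noteq> {}"
  shows "fconvex_hull (A \<union> B) = fmix A B"
proof
  obtain a b where ab: "a \<in> A" "b \<in> B" using assms(3,4) by blast
  have "x \<in> fmix A B" if "x \<in> A" for x
    using that ab(2) unfolding fmix_def by (intro image_eqI[of _ _ "(1, x, b)"]) auto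
  moreover have "x \<in> fmix A B" if "x \<in> B" for x
    using that ab(1) unfolding fmix_def by (intro image_eqI[of _ _ "(0, a, x)"]) auto
  ultimately show "fconvex_hull (A \<union> B) \<subseteq> fmix A B"
    by (intro fconvex_hull_minimal fconvex_fmix A B) auto
  show "fmix A B \<subseteq> fconvex_hull (A \<union> B)"
    using fconvex_hull_subset[of "A \<union> B"] fconvex_fconvex_hull[of "A \<union> B"]
    unfolding fmix_def fconvex_def by fastforce
qed

lemma compact_fconvex_hull_UN:
  fixes C :: "'i \<Rightarrow> ('a set \<Rightarrow> real) set"
  assumes "finite I" and "\<And>i. i \<in> I \<Longrightarrow> compact (C i) \<and> fconvex (C i)"
  shows "compact (fconvex_hull (\<Union>i\<in>I. C i))"
  using assms
proof (induction I rule: finite_induct)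
  case empty
  have "fconvex ({} :: ('a set \<Rightarrow> real) set)" unfolding fconvex_def by blast
  then show ?case by (simp add: fconvex_hull_eq)
next
  case (insert i I)
  define H where "H = fconvex_hull (\<Union>j\<in>I. C j)"
  have H: "compact H" "fconvex H" unfolding H_def using insert by (auto simp: fconvex_fconvex_hull)
  have Ci: "compact (C i)" "fconvex (C i)" using insert by auto
  have "fconvex_hull (\<Union>j\<in>insert i I. C j) = fconvex_hull (H \<union> C i)"
    unfolding H_def fconvex_hull_Un_hull by (simp add: Un_commute)
  also have "\<dots> = (if H = {} then C i else if C i = {} then H else fmix H (C i))"
    using H Ci by (simp add: fconvex_hull_eq fconvex_hull_Un_eq_fmix)
  finally show ?case using H Ci by (simp add: compact_fmix)
qed

section \<open>Expected utility as a function of the prior\<close>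

lemma eu_const:
  assumes "p \<in> fa_probs \<Sigma>"
  shows "eu p u (\<lambda>_. x) = u x"
proof -
  have "range (\<lambda>_::'a. x) = {x}" by auto
  then show ?thesis using assms unfolding eu_def fa_probs_def by simp
qed

lemma const_in_simple_acts:
  assumes "algebra UNIV \<Sigma>" and "x \<in> X"
  shows "(\<lambda>_. x) \<in> simple_acts \<Sigma> X"
proof -
  interpret algebra UNIV \<Sigma> by fact
  have "(\<lambda>_::'a. x) -` {y} \<in> \<Sigma>" for y by (cases "x = y") auto
  moreover have "range (\<lambda>_::'a. x) = {x}" by auto
  ultimately show ?thesis unfolding simple_acts_def using assms(2) by auto
qed

lemma continuous_on_eu: "continuous_on S (\<lambda>p. eu p u f)"
  unfolding eu_def
  by (intro continuous_intros continuous_on_subset[OF continuous_on_product_coordinates]) auto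

lemma eu_mix: "eu (\<lambda>E. t * p E + (1 - t) * q E) u f = t * eu p u f + (1 - t) * eu q u f"
proof -
  have "eu (\<lambda>E. t * p E + (1 - t) * q E) u f
      = (\<Sum>y\<in>range f. t * (u y * p (f -` {y})) + (1 - t) * (u y * q (f -` {y})))"
    unfolding eu_def by (intro sum.cong) (simp_all add: algebra_simps)
  then show ?thesis unfolding eu_def by (simp only: sum.distrib sum_distrib_left)
qed

lemma fconvex_eu_less: "fconvex {p. eu p u g < eu p u f}"
  unfolding fconvex_def
proof (intro ballI allI impI, unfold mem_Collect_eq eu_mix)
  fix p q and t :: real
  assume "eu p u g < eu p u f" "eu q u g < eu q u f" "0 \<le> t \<and> t \<le> 1"
  then show "t * eu p u g + (1 - t) * eu q u g < t * eu p u f + (1 - t) * eu q u f"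
    by (cases "t = 0") (auto intro!: add_less_le_mono mult_strict_left_mono mult_left_mono)
qed

lemma dominance_fconvex_hull:
  assumes "\<And>p. p \<in> P \<Longrightarrow> eu p u g < eu p u f" and "p \<in> fconvex_hull P"
  shows "eu p u g < eu p u f"
proof -
  have "fconvex_hull P \<subseteq> {p. eu p u g < eu p u f}"
    using assms(1) by (intro fconvex_hull_minimal fconvex_eu_less) blast
  with assms(2) show ?thesis by blast
qed

lemma compact_eu_image: "compact C \<Longrightarrow> compact ((\<lambda>p. eu p u f) ` C)"
  by (rule compact_continuous_image[OF continuous_on_eu])

lemma INF_eu_le:
  assumes "compact C" and "p \<in> C"
  shows "(INF q\<in>C. eu q u f) \<le> eu p u f"
  using assms compact_eu_image[OF assms(1)]
  by (intro cINF_lower bounded_imp_bdd_below compact_imp_bounded)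

lemma eu_le_SUP:
  assumes "compact C" and "p \<in> C"
  shows "eu p u f \<le> (SUP q\<in>C. eu q u f)"
  using assms compact_eu_image[OF assms(1)]
  by (intro cSUP_upper bounded_imp_bdd_above compact_imp_bounded)

lemma INF_eu_attained:
  assumes "compact C" and "C \<noteq> {}"
  shows "\<exists>p\<in>C. (INF q\<in>C. eu q u f) = eu p u f"
proof -
  obtain p where "p \<in> C" "\<And>q. q \<in> C \<Longrightarrow> eu p u f \<le> eu q u f"
    using continuous_attains_inf[OF assms continuous_on_eu] by blast
  then have "(INF q\<in>C. eu q u f) = eu p u f"
    using assms by (intro antisym INF_eu_le cINF_greatest) auto
  with \<open>p \<in> C\<close> show ?thesis by blast
qed

lemma SUP_eu_attained:
  assumes "compact C" and "C \<noteq> {}"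
  shows "\<exists>p\<in>C. (SUP q\<in>C. eu q u f) = eu p u f"
proof -
  obtain p where "p \<in> C" "\<And>q. q \<in> C \<Longrightarrow> eu q u f \<le> eu p u f"
    using continuous_attains_sup[OF assms continuous_on_eu] by blast
  then have "(SUP q\<in>C. eu q u f) = eu p u f"
    using assms by (intro antisym eu_le_SUP cSUP_least) auto
  with \<open>p \<in> C\<close> show ?thesis by blast
qed

lemma INF_eu_strict_mono:
  assumes "compact C" and "C \<noteq> {}" and "\<And>p. p \<in> C \<Longrightarrow> eu p u g < eu p u f"
  shows "(INF p\<in>C. eu p u g) < (INF p\<in>C. eu p u f)"
proof -
  obtain p where "p \<in> C" "(INF q\<in>C. eu q u f) = eu p u f"
    using INF_eu_attained[OF assms(1,2)] by blast
  then have "(INF q\<in>C. eu q u g) \<le> eu p u g" "eu p u g < eu p u f"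
    using INF_eu_le[OF assms(1)] assms(3) by blast+
  with \<open>(INF q\<in>C. eu q u f) = eu p u f\<close> show ?thesis by linarith
qed

lemma SUP_eu_strict_mono:
  assumes "compact C" and "C \<noteq> {}" and "\<And>p. p \<in> C \<Longrightarrow> eu p u g < eu p u f"
  shows "(SUP p\<in>C. eu p u g) < (SUP p\<in>C. eu p u f)"
proof -
  obtain p where "p \<in> C" "(SUP q\<in>C. eu q u g) = eu p u g"
    using SUP_eu_attained[OF assms(1,2)] by blast
  then have "eu p u f \<le> (SUP q\<in>C. eu q u f)" "eu p u g < eu p u f"
    using eu_le_SUP[OF assms(1)] assms(3) by blast+
  with \<open>(SUP q\<in>C. eu q u g) = eu p u g\<close> show ?thesis by linarith
qed

section \<open>Acts measurable with respect to finitely many events\<close>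

definition atom :: "'a set set \<Rightarrow> 'a set set \<Rightarrow> 'a set" where
  "atom F G = {s. {A\<in>F. s \<in> A} = G}"

lemma atom_in_sets:
  assumes "algebra UNIV \<Sigma>" and "finite F" and "F \<subseteq> \<Sigma>"
  shows "atom F G \<in> \<Sigma>"
proof -
  interpret algebra UNIV \<Sigma> by fact
  consider "\<not> G \<subseteq> F" | "F = {}" | "G \<subseteq> F" "F \<noteq> {}" by blast
  then show ?thesis
  proof cases
    case 1
    then have "atom F G = {}" unfolding atom_def by auto
    then show ?thesis by simp
  next
    case 2
    then have "atom F G = (if G = {} then UNIV else {})" unfolding atom_def by auto
    then show ?thesis by simp
  next
    case 3
    then have "atom F G = {s. \<forall>A\<in>F. s \<in> A \<longleftrightarrow> A \<in> G}"
      unfolding atom_def by blast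
    also have "\<dots> = (\<Inter>A\<in>F. if A \<in> G then A else UNIV - A)"
      using 3 by auto
    also have "\<dots> \<in> \<Sigma>" using 3 assms(2,3) by (intro finite_INT) auto
    finally show ?thesis .
  qed
qed

lemma atom_disjoint: "G \<noteq> H \<Longrightarrow> atom F G \<inter> atom F H = {}"
  unfolding atom_def by blast

lemma in_own_atom: "s \<in> atom F {A\<in>F. s \<in> A}"
  unfolding atom_def by simp

lemma UN_atom_Pow: "(\<Union>G\<in>Pow F. atom F G) = UNIV"
proof -
  have "s \<in> (\<Union>G\<in>Pow F. atom F G)" for s
    by (rule UN_I[of "{A\<in>F. s \<in> A}"]) (auto intro: in_own_atom)
  then show ?thesis by auto
qed

lemma UN_atom_containing:
  assumes "A \<in> F"
  shows "(\<Union>G\<in>{G\<in>Pow F. A \<in> G}. atom F G) = A"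
proof
  show "(\<Union>G\<in>{G\<in>Pow F. A \<in> G}. atom F G) \<subseteq> A" unfolding atom_def by auto
  show "A \<subseteq> (\<Union>G\<in>{G\<in>Pow F. A \<in> G}. atom F G)"
  proof
    fix s assume "s \<in> A"
    then show "s \<in> (\<Union>G\<in>{G\<in>Pow F. A \<in> G}. atom F G)"
      using assms by (intro UN_I[of "{A\<in>F. s \<in> A}"]) (auto intro: in_own_atom)
  qed
qed

lemma fa_probs_UN_atom:
  assumes "algebra UNIV \<Sigma>" and "p \<in> fa_probs \<Sigma>" and "finite F" and "F \<subseteq> \<Sigma>"
    and "\<G> \<subseteq> Pow F"
  shows "p (\<Union>G\<in>\<G>. atom F G) = (\<Sum>G\<in>\<G>. p (atom F G))"
  using assms finite_subset[OF assms(5)]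
  by (intro fa_probs_UN_disjoint atom_in_sets atom_disjoint) auto

lemma vimage_pattern_act:
  "(\<lambda>s. \<phi> {A\<in>F. s \<in> A}) -` {y} = (\<Union>G\<in>{G\<in>Pow F. \<phi> G = y}. atom F G)"
  unfolding atom_def by auto

lemma pattern_act_in_simple_acts:
  assumes "algebra UNIV \<Sigma>" and "finite F" and "F \<subseteq> \<Sigma>" and "\<phi> ` Pow F \<subseteq> X"
  shows "(\<lambda>s. \<phi> {A\<in>F. s \<in> A}) \<in> simple_acts \<Sigma> X"
  unfolding simple_acts_def
proof (intro CollectI conjI allI)
  interpret algebra UNIV \<Sigma> by fact
  have range: "range (\<lambda>s. \<phi> {A\<in>F. s \<in> A}) \<subseteq> \<phi> ` Pow F" by auto
  then show "finite (range (\<lambda>s. \<phi> {A\<in>F. s \<in> A}))"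
    by (rule finite_subset) (simp add: assms(2))
  show "range (\<lambda>s. \<phi> {A\<in>F. s \<in> A}) \<subseteq> X" using range assms(4) by (rule order_trans)
  show "(\<lambda>s. \<phi> {A\<in>F. s \<in> A}) -` {y} \<in> \<Sigma>" for y
    unfolding vimage_pattern_act using assms(2)
    by (intro finite_UN atom_in_sets[OF assms(1-3)]) auto
qed

lemma eu_pattern_act:
  assumes "algebra UNIV \<Sigma>" and p: "p \<in> fa_probs \<Sigma>" and "finite F" and "F \<subseteq> \<Sigma>"
  shows "eu p u (\<lambda>s. \<phi> {A\<in>F. s \<in> A}) = (\<Sum>G\<in>Pow F. u (\<phi> G) * p (atom F G))"
proof -
  let ?f = "\<lambda>s. \<phi> {A\<in>F. s \<in> A}"
  have range: "range ?f \<subseteq> \<phi> ` Pow F" by auto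
  have "eu p u ?f = (\<Sum>y\<in>\<phi> ` Pow F. u y * p (?f -` {y}))"
    unfolding eu_def
  proof (rule sum.mono_neutral_left)
    have "?f -` {y} = {}" if "y \<notin> range ?f" for y using that by auto
    then show "\<forall>y\<in>\<phi> ` Pow F - range ?f. u y * p (?f -` {y}) = 0"
      using fa_probs_empty[OF assms(1) p] by simp
  qed (use range assms(3) in auto)
  also have "\<dots> = (\<Sum>y\<in>\<phi> ` Pow F. \<Sum>G\<in>{G\<in>Pow F. \<phi> G = y}. u (\<phi> G) * p (atom F G))"
  proof (intro sum.cong refl)
    fix y
    have "p (?f -` {y}) = (\<Sum>G\<in>{G\<in>Pow F. \<phi> G = y}. p (atom F G))"
      unfolding vimage_pattern_act by (rule fa_probs_UN_atom[OF assms]) auto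
    then show "u y * p (?f -` {y}) = (\<Sum>G\<in>{G\<in>Pow F. \<phi> G = y}. u (\<phi> G) * p (atom F G))"
      by (auto simp: sum_distrib_left intro!: sum.cong)
  qed
  also have "\<dots> = (\<Sum>G\<in>Pow F. u (\<phi> G) * p (atom F G))"
    by (rule sum.image_gen[of "Pow F" "\<lambda>G. u (\<phi> G) * p (atom F G)" \<phi>, symmetric])
      (simp add: assms(3))
  finally show ?thesis .
qed

lemma sum_weights_over_atoms:
  assumes "algebra UNIV \<Sigma>" and "p \<in> fa_probs \<Sigma>" and "finite F" and "F \<subseteq> \<Sigma>"
  shows "(\<Sum>G\<in>Pow F. (\<Sum>A\<in>G. w A) * p (atom F G)) = (\<Sum>A\<in>F. w A * p A)"
proof -
  have "(\<Sum>G\<in>Pow F. (\<Sum>A\<in>G. w A) * p (atom F G))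
      = (\<Sum>G\<in>Pow F. \<Sum>A\<in>{A\<in>F. A \<in> G}. w A * p (atom F G))"
    by (intro sum.cong) (auto simp: sum_distrib_right intro: sum.cong)
  also have "\<dots> = (\<Sum>A\<in>F. \<Sum>G\<in>{G\<in>Pow F. A \<in> G}. w A * p (atom F G))"
    using assms(3) by (intro sum.swap_restrict) auto
  also have "\<dots> = (\<Sum>A\<in>F. w A * p A)"
  proof (intro sum.cong refl)
    fix A assume "A \<in> F"
    then have "p A = p (\<Union>G\<in>{G\<in>Pow F. A \<in> G}. atom F G)"
      by (simp only: UN_atom_containing)
    also have "\<dots> = (\<Sum>G\<in>{G\<in>Pow F. A \<in> G}. p (atom F G))"
      by (rule fa_probs_UN_atom[OF assms]) auto
    finally show "(\<Sum>G\<in>{G\<in>Pow F. A \<in> G}. w A * p (atom F G)) = w A * p A"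
      by (simp add: sum_distrib_left)
  qed
  finally show ?thesis .
qed

lemma sum_fa_probs_atoms:
  assumes "algebra UNIV \<Sigma>" and p: "p \<in> fa_probs \<Sigma>" and "finite F" and "F \<subseteq> \<Sigma>"
  shows "(\<Sum>G\<in>Pow F. p (atom F G)) = 1"
  using fa_probs_UN_atom[OF assms, of "Pow F"] p unfolding UN_atom_Pow fa_probs_def by simp

lemma affine_on_segment:
  assumes "convex X" and "affine_on X u" and "x1 \<in> X" and "x2 \<in> X" and "0 \<le> t" and "t \<le> 1"
  shows "t *\<^sub>R x2 + (1 - t) *\<^sub>R x1 \<in> X"
    and "u (t *\<^sub>R x2 + (1 - t) *\<^sub>R x1) = u x1 + t * (u x2 - u x1)"
proof -
  show "t *\<^sub>R x2 + (1 - t) *\<^sub>R x1 \<in> X" using assms by (intro convexD) auto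
  have "u (t *\<^sub>R x2 + (1 - t) *\<^sub>R x1) = t * u x2 + (1 - t) * u x1"
    using assms(2-) unfolding affine_on_def by blast
  then show "u (t *\<^sub>R x2 + (1 - t) *\<^sub>R x1) = u x1 + t * (u x2 - u x1)"
    by (simp add: algebra_simps)
qed

lemma exists_act_with_linear_eu:
  assumes alg: "algebra UNIV \<Sigma>" and "convex X" and "affine_on X u"
    and "x1 \<in> X" and "x2 \<in> X" and F: "finite F" "F \<subseteq> \<Sigma>"
    and small: "(\<Sum>A\<in>F. \<bar>w A\<bar>) \<le> 1/2"
  shows "\<exists>f\<in>simple_acts \<Sigma> X. \<forall>q\<in>fa_probs \<Sigma>.
           eu q u f = u x1 + (1/2 + (\<Sum>A\<in>F. w A * q A)) * (u x2 - u x1)"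
proof -
  define t where "t G = 1/2 + (\<Sum>A\<in>G. w A)" for G
  define \<phi> where "\<phi> G = t G *\<^sub>R x2 + (1 - t G) *\<^sub>R x1" for G
  have "0 \<le> t G \<and> t G \<le> 1" if "G \<subseteq> F" for G
  proof -
    have "\<bar>\<Sum>A\<in>G. w A\<bar> \<le> (\<Sum>A\<in>G. \<bar>w A\<bar>)" by (rule sum_abs)
    also have "\<dots> \<le> (\<Sum>A\<in>F. \<bar>w A\<bar>)" using that F by (intro sum_mono2) auto
    finally show ?thesis using small unfolding t_def by linarith
  qed
  then have \<phi>: "\<phi> G \<in> X" "u (\<phi> G) = u x1 + t G * (u x2 - u x1)" if "G \<subseteq> F" for G
    unfolding \<phi>_def using affine_on_segment[OF assms(2-5)] that by auto
  show ?thesis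
  proof (intro bexI ballI)
    show "(\<lambda>s. \<phi> {A\<in>F. s \<in> A}) \<in> simple_acts \<Sigma> X"
      using \<phi> by (intro pattern_act_in_simple_acts[OF alg F]) auto
    fix q assume q: "q \<in> fa_probs \<Sigma>"
    have "eu q u (\<lambda>s. \<phi> {A\<in>F. s \<in> A}) = (\<Sum>G\<in>Pow F. u (\<phi> G) * q (atom F G))"
      by (rule eu_pattern_act[OF alg q F])
    also have "\<dots> = (\<Sum>G\<in>Pow F. (u x1 + (u x2 - u x1) / 2) * q (atom F G)
                      + (u x2 - u x1) * ((\<Sum>A\<in>G. w A) * q (atom F G)))"
    proof (intro sum.cong refl)
      fix G assume "G \<in> Pow F"
      then have uG: "u (\<phi> G) = u x1 + t G * (u x2 - u x1)" using \<phi>(2) by blast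
      show "u (\<phi> G) * q (atom F G) = (u x1 + (u x2 - u x1) / 2) * q (atom F G)
                   + (u x2 - u x1) * ((\<Sum>A\<in>G. w A) * q (atom F G))"
        unfolding uG t_def by (simp add: algebra_simps)
    qed
    also have "\<dots> = u x1 + (u x2 - u x1) / 2 + (u x2 - u x1) * (\<Sum>A\<in>F. w A * q A)"
      by (simp add: sum.distrib flip: sum_distrib_left
          sum_fa_probs_atoms[OF alg q F] sum_weights_over_atoms[OF alg q F])
    finally show "eu q u (\<lambda>s. \<phi> {A\<in>F. s \<in> A}) = u x1 + (1/2 + (\<Sum>A\<in>F. w A * q A)) * (u x2 - u x1)"
      by (simp add: algebra_simps)
  qed
qed

section \<open>Separating a prior from a compact convex set of priors\<close>

lemma finite_events_distinguish:
  assumes "compact K" and "K \<subseteq> fa_probs \<Sigma>" and "p0 \<in> fa_probs \<Sigma>" and "p0 \<notin> K"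
  shows "\<exists>F. finite F \<and> F \<subseteq> \<Sigma> \<and> (\<forall>q\<in>K. \<exists>A\<in>F. q A \<noteq> p0 A)"
proof -
  have "\<exists>A\<in>\<Sigma>. q A \<noteq> p0 A" if "q \<in> K" for q
  proof -
    have "q \<noteq> p0" using that assms(4) by blast
    then obtain A where "q A \<noteq> p0 A" by (auto simp: fun_eq_iff)
    have "q \<in> fa_probs \<Sigma>" using that assms(2) by blast
    have "A \<in> \<Sigma>"
    proof (rule ccontr)
      assume "A \<notin> \<Sigma>"
      then have "q A = 0" "p0 A = 0" using \<open>q \<in> fa_probs \<Sigma>\<close> assms(3) unfolding fa_probs_def by auto
      with \<open>q A \<noteq> p0 A\<close> show False by simp
    qed
    with \<open>q A \<noteq> p0 A\<close> show ?thesis by blast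
  qed
  then obtain A where A: "\<And>q. q \<in> K \<Longrightarrow> A q \<in> \<Sigma> \<and> q (A q) \<noteq> p0 (A q)" by metis
  define V where "V q = {r. r (A q) \<noteq> p0 (A q)}" for q
  have "open (V q)" for q
    unfolding V_def by (intro open_Collect_neq continuous_on_product_coordinates continuous_intros)
  moreover have "K \<subseteq> (\<Union>q\<in>K. V q)" using A unfolding V_def by blast
  ultimately obtain K' where "K' \<subseteq> K" "finite K'" "K \<subseteq> (\<Union>q\<in>K'. V q)"
    using compactE_image[OF assms(1)] by metis
  then show ?thesis using A unfolding V_def by (intro exI[of _ "A ` K'"]) blast
qed

lemma nonneg_of_quadratic_nonneg:
  fixes S Q :: real
  assumes "0 \<le> Q" and "\<And>t. 0 < t \<Longrightarrow> t \<le> 1 \<Longrightarrow> 0 \<le> 2 * t * S + t\<^sup>2 * Q"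
  shows "0 \<le> S"
proof (rule ccontr)
  assume "\<not> 0 \<le> S"
  define t where "t = min 1 (- S / (Q + 1))"
  have "0 < t" "t \<le> 1" unfolding t_def using \<open>\<not> 0 \<le> S\<close> assms(1) by (auto intro: divide_neg_pos)
  then have "0 \<le> 2 * t * S + t\<^sup>2 * Q" by (rule assms(2))
  then have "0 \<le> t * (2 * S + t * Q)" by (simp add: power2_eq_square algebra_simps)
  with \<open>0 < t\<close> have "0 \<le> 2 * S + t * Q" by (simp add: zero_le_mult_iff)
  have "t \<le> - S / (Q + 1)" unfolding t_def by simp
  then have "t * Q \<le> - S * (Q / (Q + 1))"
    using mult_right_mono[OF _ assms(1)] by fastforce
  also have "\<dots> < - S * 1"
    using \<open>\<not> 0 \<le> S\<close> assms(1) by (intro mult_strict_left_mono) auto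
  finally show False using \<open>0 \<le> 2 * S + t * Q\<close> \<open>\<not> 0 \<le> S\<close> by linarith
qed

lemma nearest_point_variational_ineq:
  fixes K :: "('a set \<Rightarrow> real) set"
  assumes "fconvex K" and "qs \<in> K" and "q \<in> K"
    and nearest: "\<And>r. r \<in> K \<Longrightarrow> (\<Sum>A\<in>F. (qs A - p0 A)\<^sup>2) \<le> (\<Sum>A\<in>F. (r A - p0 A)\<^sup>2)"
  shows "0 \<le> (\<Sum>A\<in>F. (qs A - p0 A) * (q A - qs A))"
proof (rule nonneg_of_quadratic_nonneg)
  show "0 \<le> (\<Sum>A\<in>F. (q A - qs A)\<^sup>2)" by (intro sum_nonneg) auto
  fix t :: real assume "0 < t" "t \<le> 1"
  then have "(\<lambda>E. t * q E + (1 - t) * qs E) \<in> K"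
    using assms(1-3) unfolding fconvex_def by auto
  then have "(\<Sum>A\<in>F. (qs A - p0 A)\<^sup>2) \<le> (\<Sum>A\<in>F. (t * q A + (1 - t) * qs A - p0 A)\<^sup>2)"
    by (rule nearest)
  also have "\<dots> = (\<Sum>A\<in>F. (qs A - p0 A)\<^sup>2 + 2 * t * ((qs A - p0 A) * (q A - qs A))
                     + t\<^sup>2 * (q A - qs A)\<^sup>2)"
    by (intro sum.cong) (simp_all add: power2_eq_square algebra_simps)
  also have "\<dots> = (\<Sum>A\<in>F. (qs A - p0 A)\<^sup>2) + 2 * t * (\<Sum>A\<in>F. (qs A - p0 A) * (q A - qs A))
                     + t\<^sup>2 * (\<Sum>A\<in>F. (q A - qs A)\<^sup>2)"
    by (simp add: sum.distrib sum_distrib_left)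
  finally show "0 \<le> 2 * t * (\<Sum>A\<in>F. (qs A - p0 A) * (q A - qs A)) + t\<^sup>2 * (\<Sum>A\<in>F. (q A - qs A)\<^sup>2)"
    by simp
qed

lemma finite_projection_separation:
  fixes K :: "('a set \<Rightarrow> real) set"
  assumes "compact K" and "fconvex K" and "finite F" and sep: "\<forall>q\<in>K. \<exists>A\<in>F. q A \<noteq> p0 A"
  shows "\<exists>w. \<forall>q\<in>K. (\<Sum>A\<in>F. w A * p0 A) < (\<Sum>A\<in>F. w A * q A)"
proof (cases "K = {}")
  case False
  \<comment> \<open>The nearest point \<open>qs\<close> of \<open>K\<close> to \<open>p0\<close> on the events \<open>F\<close>; \<open>qs - p0\<close> is the separating direction.\<close>
  define D where "D r = (\<Sum>A\<in>F. (r A - p0 A)\<^sup>2)" for r :: "'a set \<Rightarrow> real"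
  have "continuous_on K D"
    unfolding D_def
    by (intro continuous_intros continuous_on_subset[OF continuous_on_product_coordinates]) auto
  then obtain qs where qs: "qs \<in> K" "\<And>r. r \<in> K \<Longrightarrow> D qs \<le> D r"
    using continuous_attains_inf[OF assms(1) False] by blast
  have "0 < D qs"
  proof -
    obtain A where "A \<in> F" "qs A \<noteq> p0 A" using sep qs(1) by blast
    then have "0 < (qs A - p0 A)\<^sup>2" by simp
    also have "\<dots> \<le> D qs" unfolding D_def using \<open>A \<in> F\<close> assms(3) by (intro member_le_sum) auto
    finally show ?thesis .
  qed
  show ?thesis
  proof (intro exI ballI)
    fix q assume "q \<in> K"
    have "(\<Sum>A\<in>F. (qs A - p0 A) * q A) - (\<Sum>A\<in>F. (qs A - p0 A) * p0 A)
        = (\<Sum>A\<in>F. (qs A - p0 A) * (q A - qs A)) + D qs"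
      unfolding D_def
      by (simp add: sum_subtractf[symmetric] sum.distrib[symmetric] power2_eq_square algebra_simps)
    moreover have "0 \<le> (\<Sum>A\<in>F. (qs A - p0 A) * (q A - qs A))"
      using nearest_point_variational_ineq[OF assms(2) qs(1) \<open>q \<in> K\<close>] qs(2) unfolding D_def by blast
    ultimately show "(\<Sum>A\<in>F. (qs A - p0 A) * p0 A) < (\<Sum>A\<in>F. (qs A - p0 A) * q A)"
      using \<open>0 < D qs\<close> by linarith
  qed
qed simp

lemma separating_act:
  assumes alg: "algebra UNIV \<Sigma>" and X: "convex X" "affine_on X u"
    and x: "x1 \<in> X" "x2 \<in> X" "u x1 < u x2"
    and K: "compact K" "fconvex K" "K \<subseteq> fa_probs \<Sigma>"
    and p0: "p0 \<in> fa_probs \<Sigma>" "p0 \<notin> K"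
  shows "\<exists>f\<in>simple_acts \<Sigma> X. \<exists>x\<in>X. eu p0 u f = u x \<and> (\<forall>q\<in>K. u x < eu q u f)"
proof -
  obtain F where F: "finite F" "F \<subseteq> \<Sigma>" and "\<forall>q\<in>K. \<exists>A\<in>F. q A \<noteq> p0 A"
    using finite_events_distinguish[OF K(1,3) p0] by blast
  then obtain v where v: "\<And>q. q \<in> K \<Longrightarrow> (\<Sum>A\<in>F. v A * p0 A) < (\<Sum>A\<in>F. v A * q A)"
    using finite_projection_separation[OF K(1,2) F(1)] by blast
  \<comment> \<open>Rescaling keeps the values of the act on the segment between \<open>x1\<close> and \<open>x2\<close>.\<close>
  define c where "c = 2 * (\<Sum>A\<in>F. \<bar>v A\<bar>) + 1"
  define w where "w A = v A / c" for A
  define L where "L q = (\<Sum>A\<in>F. w A * q A)" for q :: "'a set \<Rightarrow> real"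
  have "0 < c" unfolding c_def by (simp add: add_nonneg_pos sum_nonneg)
  then have "(\<Sum>A\<in>F. \<bar>w A\<bar>) = (\<Sum>A\<in>F. \<bar>v A\<bar>) / c"
    unfolding w_def by (simp add: sum_divide_distrib)
  also have "\<dots> \<le> 1/2" using \<open>0 < c\<close> unfolding c_def by (simp add: field_simps)
  finally have small: "(\<Sum>A\<in>F. \<bar>w A\<bar>) \<le> 1/2" .
  obtain f where f: "f \<in> simple_acts \<Sigma> X"
    and eu_f: "\<And>q. q \<in> fa_probs \<Sigma> \<Longrightarrow> eu q u f = u x1 + (1/2 + L q) * (u x2 - u x1)"
    unfolding L_def using exists_act_with_linear_eu[OF alg X x(1,2) F small] by blast
  have "\<bar>L p0\<bar> \<le> 1/2"
    unfolding L_def using abs_sum_fa_probs_le[OF alg p0(1)] small by (rule order_trans)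
  then have "0 \<le> 1/2 + L p0" "1/2 + L p0 \<le> 1" by auto
  note segment = affine_on_segment[OF X x(1,2) this]
  define x0 where "x0 = (1/2 + L p0) *\<^sub>R x2 + (1 - (1/2 + L p0)) *\<^sub>R x1"
  have "x0 \<in> X" unfolding x0_def by (rule segment(1))
  have "u x0 = eu p0 u f" unfolding x0_def segment(2) eu_f[OF p0(1)] ..
  have "u x0 < eu q u f" if "q \<in> K" for q
  proof -
    have "L p0 < L q" unfolding L_def w_def using v[OF that] \<open>0 < c\<close>
      by (simp add: sum_divide_distrib[symmetric] divide_strict_right_mono)
    then show ?thesis
      using eu_f p0(1) K(3) that x(3) \<open>u x0 = eu p0 u f\<close> by (auto intro: mult_strict_right_mono)
  qed
  with f \<open>x0 \<in> X\<close> \<open>u x0 = eu p0 u f\<close> show ?thesis by (intro bexI[of _ f] bexI[of _ x0]) auto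
qed

section \<open>Comparisons with constant acts\<close>

lemma bewley_rep_iff:
  assumes "bewley_rep \<Sigma> X pr u C" and "f \<in> simple_acts \<Sigma> X" and "g \<in> simple_acts \<Sigma> X"
  shows "pr f g \<longleftrightarrow> (\<forall>p\<in>C. eu p u g < eu p u f)"
  using assms unfolding bewley_rep_def by simp

lemma bewley_rep_fa_probs: "bewley_rep \<Sigma> X pr u C \<Longrightarrow> C \<subseteq> fa_probs \<Sigma>"
  unfolding bewley_rep_def by simp

lemma hp_rep_iff:
  assumes "hp_rep \<Sigma> X pr u C D" and "f \<in> simple_acts \<Sigma> X" and "g \<in> simple_acts \<Sigma> X"
  shows "pr f g \<longleftrightarrow>
    (INF p\<in>C. eu p u g) < (INF p\<in>C. eu p u f) \<and> (SUP p\<in>D. eu p u g) < (SUP p\<in>D. eu p u f)"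
  using assms unfolding hp_rep_def by simp

definition bewley_on_constants :: "'a set set \<Rightarrow> 'b::real_vector set \<Rightarrow> ('a,'b) pref
    \<Rightarrow> ('b \<Rightarrow> real) \<Rightarrow> ('a set \<Rightarrow> real) set \<Rightarrow> bool" where
  "bewley_on_constants \<Sigma> X pr u C \<longleftrightarrow> (\<forall>f\<in>simple_acts \<Sigma> X. \<forall>x\<in>X.
      (pr f (\<lambda>_. x) \<longleftrightarrow> (\<forall>p\<in>C. u x < eu p u f)) \<and> (pr (\<lambda>_. x) f \<longleftrightarrow> (\<forall>p\<in>C. eu p u f < u x)))"

definition respects_dominance :: "'a set set \<Rightarrow> 'b::real_vector set \<Rightarrow> ('a,'b) pref
    \<Rightarrow> ('b \<Rightarrow> real) \<Rightarrow> ('a set \<Rightarrow> real) set \<Rightarrow> bool" where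
  "respects_dominance \<Sigma> X pr u C \<longleftrightarrow> (\<forall>f\<in>simple_acts \<Sigma> X. \<forall>g\<in>simple_acts \<Sigma> X.
      (\<forall>p\<in>C. eu p u g < eu p u f) \<longrightarrow> pr f g)"

lemma bewley_on_constants_pref_const:
  "bewley_on_constants \<Sigma> X pr u C \<Longrightarrow> f \<in> simple_acts \<Sigma> X \<Longrightarrow> x \<in> X \<Longrightarrow>
    pr f (\<lambda>_. x) \<longleftrightarrow> (\<forall>p\<in>C. u x < eu p u f)"
  unfolding bewley_on_constants_def by simp

lemma bewley_on_constants_const_pref:
  "bewley_on_constants \<Sigma> X pr u C \<Longrightarrow> f \<in> simple_acts \<Sigma> X \<Longrightarrow> x \<in> X \<Longrightarrow>
    pr (\<lambda>_. x) f \<longleftrightarrow> (\<forall>p\<in>C. eu p u f < u x)"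
  unfolding bewley_on_constants_def by simp

lemma respects_dominanceD:
  "respects_dominance \<Sigma> X pr u C \<Longrightarrow> f \<in> simple_acts \<Sigma> X \<Longrightarrow> g \<in> simple_acts \<Sigma> X \<Longrightarrow>
    (\<And>p. p \<in> C \<Longrightarrow> eu p u g < eu p u f) \<Longrightarrow> pr f g"
  unfolding respects_dominance_def by simp

lemma incomp_const_iff:
  assumes "bewley_on_constants \<Sigma> X pr u C" and "f \<in> simple_acts \<Sigma> X" and "x \<in> X"
  shows "incomp pr f (\<lambda>_. x) \<longleftrightarrow> (\<exists>p\<in>C. eu p u f \<le> u x) \<and> (\<exists>p\<in>C. u x \<le> eu p u f)"
  unfolding incomp_def bewley_on_constants_pref_const[OF assms]
    bewley_on_constants_const_pref[OF assms] by (auto simp: not_less)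

lemma bewley_rep_bewley_on_constants:
  assumes alg: "algebra UNIV \<Sigma>" and bw: "bewley_rep \<Sigma> X pr u C"
  shows "bewley_on_constants \<Sigma> X pr u C"
  unfolding bewley_on_constants_def
proof (intro ballI)
  fix f x assume f: "f \<in> simple_acts \<Sigma> X" and x: "x \<in> X"
  have "eu p u (\<lambda>_. x) = u x" if "p \<in> C" for p
    using that bewley_rep_fa_probs[OF bw] by (intro eu_const) blast
  then show "(pr f (\<lambda>_. x) \<longleftrightarrow> (\<forall>p\<in>C. u x < eu p u f)) \<and> (pr (\<lambda>_. x) f \<longleftrightarrow> (\<forall>p\<in>C. eu p u f < u x))"
    by (simp add: bewley_rep_iff[OF bw f const_in_simple_acts[OF alg x]]
        bewley_rep_iff[OF bw const_in_simple_acts[OF alg x] f])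
qed

lemma bewley_rep_respects_dominance: "bewley_rep \<Sigma> X pr u C \<Longrightarrow> respects_dominance \<Sigma> X pr u C"
  unfolding respects_dominance_def using bewley_rep_iff[of \<Sigma> X pr u C] by blast

lemma hp_rep_diagonal_bewley_on_constants:
  assumes alg: "algebra UNIV \<Sigma>" and hp: "hp_rep \<Sigma> X pr u C C"
  shows "bewley_on_constants \<Sigma> X pr u C"
  unfolding bewley_on_constants_def
proof (intro ballI conjI)
  fix f x assume f: "f \<in> simple_acts \<Sigma> X" and x: "x \<in> X"
  note cx = const_in_simple_acts[OF alg x]
  have C: "compact C" "C \<noteq> {}" "C \<subseteq> fa_probs \<Sigma>" using hp unfolding hp_rep_def by auto
  have ec: "eu p u (\<lambda>_. x) = u x" if "p \<in> C" for p
    using that C(3) by (intro eu_const) blast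
  then have const: "(INF p\<in>C. eu p u (\<lambda>_. x)) = u x" "(SUP p\<in>C. eu p u (\<lambda>_. x)) = u x"
    using C(2) by (simp_all cong: INF_cong_simp SUP_cong_simp)
  show "pr f (\<lambda>_. x) \<longleftrightarrow> (\<forall>p\<in>C. u x < eu p u f)"
  proof
    assume "pr f (\<lambda>_. x)"
    then have "u x < (INF p\<in>C. eu p u f)" unfolding hp_rep_iff[OF hp f cx] const by blast
    then show "\<forall>p\<in>C. u x < eu p u f" using INF_eu_le[OF C(1)] by (blast intro: order_less_le_trans)
  next
    assume "\<forall>p\<in>C. u x < eu p u f"
    then show "pr f (\<lambda>_. x)" unfolding hp_rep_iff[OF hp f cx] using ec
      by (intro conjI INF_eu_strict_mono SUP_eu_strict_mono C(1,2)) auto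
  qed
  show "pr (\<lambda>_. x) f \<longleftrightarrow> (\<forall>p\<in>C. eu p u f < u x)"
  proof
    assume "pr (\<lambda>_. x) f"
    then have "(SUP p\<in>C. eu p u f) < u x" unfolding hp_rep_iff[OF hp cx f] const by blast
    then show "\<forall>p\<in>C. eu p u f < u x" using eu_le_SUP[OF C(1)] by (blast intro: order_le_less_trans)
  next
    assume "\<forall>p\<in>C. eu p u f < u x"
    then show "pr (\<lambda>_. x) f" unfolding hp_rep_iff[OF hp cx f] using ec
      by (intro conjI INF_eu_strict_mono SUP_eu_strict_mono C(1,2)) auto
  qed
qed

lemma hp_rep_respects_dominance:
  assumes hp: "hp_rep \<Sigma> X pr u C D"
  shows "respects_dominance \<Sigma> X pr u (C \<union> D)"
  unfolding respects_dominance_def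
proof (intro ballI impI)
  fix f g assume f: "f \<in> simple_acts \<Sigma> X" and g: "g \<in> simple_acts \<Sigma> X"
    and "\<forall>p\<in>C \<union> D. eu p u g < eu p u f"
  moreover have "compact C" "C \<noteq> {}" "compact D" "D \<noteq> {}" using hp unfolding hp_rep_def by auto
  ultimately show "pr f g" unfolding hp_rep_iff[OF hp f g]
    by (intro conjI INF_eu_strict_mono SUP_eu_strict_mono) auto
qed

lemma hp_or_bewley_rep_properties:
  assumes alg: "algebra UNIV \<Sigma>" and rep: "hp_rep \<Sigma> X pr u C C \<or> bewley_rep \<Sigma> X pr u C"
  shows "bewley_on_constants \<Sigma> X pr u C" and "respects_dominance \<Sigma> X pr u C"
    and "compact C" and "fconvex C" and "C \<subseteq> fa_probs \<Sigma>"
proof -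
  show "bewley_on_constants \<Sigma> X pr u C"
    using rep hp_rep_diagonal_bewley_on_constants[OF alg] bewley_rep_bewley_on_constants[OF alg]
    by blast
  show "respects_dominance \<Sigma> X pr u C"
    using rep hp_rep_respects_dominance[of \<Sigma> X pr u C C] bewley_rep_respects_dominance by auto
  show "compact C" "fconvex C" "C \<subseteq> fa_probs \<Sigma>"
    using rep unfolding hp_rep_def bewley_rep_def by auto
qed

section \<open>Pareto and caution\<close>

lemma fconvex_hull_bewley_priors:
  assumes "finite I" and indiv: "\<forall>i\<in>I. bewley_rep \<Sigma> X (pr i) u (C i)"
  shows "compact (fconvex_hull (\<Union>i\<in>I. C i))" and "fconvex (fconvex_hull (\<Union>i\<in>I. C i))"
    and "fconvex_hull (\<Union>i\<in>I. C i) \<subseteq> fa_probs \<Sigma>"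
proof -
  show "compact (fconvex_hull (\<Union>i\<in>I. C i))"
    using indiv \<open>finite I\<close> unfolding bewley_rep_def by (intro compact_fconvex_hull_UN) auto
  show "fconvex (fconvex_hull (\<Union>i\<in>I. C i))" by (rule fconvex_fconvex_hull)
  show "fconvex_hull (\<Union>i\<in>I. C i) \<subseteq> fa_probs \<Sigma>"
    using bewley_rep_fa_probs[OF indiv[rule_format]]
    by (intro fconvex_hull_minimal fconvex_fa_probs) blast
qed

lemma unanimity_iff_dominance_on_fconvex_hull:
  assumes indiv: "\<forall>i\<in>I. bewley_rep \<Sigma> X (pr i) u (C i)"
    and "f \<in> simple_acts \<Sigma> X" and "g \<in> simple_acts \<Sigma> X"
  shows "(\<forall>i\<in>I. pr i f g) \<longleftrightarrow> (\<forall>p\<in>fconvex_hull (\<Union>i\<in>I. C i). eu p u g < eu p u f)"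
proof -
  have "(\<forall>i\<in>I. pr i f g) \<longleftrightarrow> (\<forall>p\<in>(\<Union>i\<in>I. C i). eu p u g < eu p u f)"
    by (simp add: bewley_rep_iff[OF indiv[rule_format] assms(2,3)])
  also have "\<dots> \<longleftrightarrow> (\<forall>p\<in>fconvex_hull (\<Union>i\<in>I. C i). eu p u g < eu p u f)"
    using fconvex_hull_subset[of "\<Union>i\<in>I. C i"] dominance_fconvex_hull[of "\<Union>i\<in>I. C i" u g f]
    by blast
  finally show ?thesis .
qed

lemma incomp_const_mono:
  assumes "bewley_on_constants \<Sigma> X pr u C" and "bewley_on_constants \<Sigma> X pr' u C'" and "C \<subseteq> C'"
    and "f \<in> simple_acts \<Sigma> X" and "x \<in> X" and "incomp pr f (\<lambda>_. x)"
  shows "incomp pr' f (\<lambda>_. x)"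
  using assms(3,6) unfolding incomp_const_iff[OF assms(1,4,5)] incomp_const_iff[OF assms(2,4,5)]
  by blast

lemma pareto_iff_subset_hull:
  fixes pr :: "'i \<Rightarrow> ('a,'b::real_vector) pref" and C :: "'i \<Rightarrow> ('a set \<Rightarrow> real) set"
  assumes alg: "algebra UNIV \<Sigma>" and X: "convex X" "affine_on X u"
    and x: "x1 \<in> X" "x2 \<in> X" "u x1 < u x2"
    and "finite I" and indiv: "\<forall>i\<in>I. bewley_rep \<Sigma> X (pr i) u (C i)"
    and soc: "bewley_on_constants \<Sigma> X pr0 u C0" "respects_dominance \<Sigma> X pr0 u C0"
      "C0 \<subseteq> fa_probs \<Sigma>"
  shows "(\<forall>f\<in>simple_acts \<Sigma> X. \<forall>g\<in>simple_acts \<Sigma> X. (\<forall>i\<in>I. pr i f g) \<longrightarrow> pr0 f g)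
           \<longleftrightarrow> C0 \<subseteq> fconvex_hull (\<Union>i\<in>I. C i)" (is "?pareto \<longleftrightarrow> C0 \<subseteq> ?K")
proof
  note K = fconvex_hull_bewley_priors[OF \<open>finite I\<close> indiv]
  note unanimity = unanimity_iff_dominance_on_fconvex_hull[OF indiv]
  assume pareto: ?pareto
  show "C0 \<subseteq> ?K"
  proof
    fix p0 assume "p0 \<in> C0"
    show "p0 \<in> ?K"
    proof (rule ccontr)
      assume "p0 \<notin> ?K"
      moreover have "p0 \<in> fa_probs \<Sigma>" using soc(3) \<open>p0 \<in> C0\<close> by blast
      ultimately obtain f x0 where f: "f \<in> simple_acts \<Sigma> X" and "x0 \<in> X"
        and "eu p0 u f = u x0" and above: "\<forall>q\<in>?K. u x0 < eu q u f"
        using separating_act[OF alg X x K] by blast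
      note cx = const_in_simple_acts[OF alg \<open>x0 \<in> X\<close>]
      have "eu q u (\<lambda>_. x0) < eu q u f" if "q \<in> ?K" for q
        using that above K(3) by (subst eu_const) blast+
      then have "pr0 f (\<lambda>_. x0)" using pareto unanimity[OF f cx] f cx by blast
      then have "u x0 < eu p0 u f"
        using bewley_on_constants_pref_const[OF soc(1) f \<open>x0 \<in> X\<close>] \<open>p0 \<in> C0\<close> by blast
      with \<open>eu p0 u f = u x0\<close> show False by simp
    qed
  qed
next
  assume "C0 \<subseteq> ?K"
  then show ?pareto
    using respects_dominanceD[OF soc(2)]
      unanimity_iff_dominance_on_fconvex_hull[OF indiv] by blast
qed

lemma caution_iff_hull_subset:
  fixes pr :: "'i \<Rightarrow> ('a,'b::real_vector) pref" and C :: "'i \<Rightarrow> ('a set \<Rightarrow> real) set"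
  assumes alg: "algebra UNIV \<Sigma>" and X: "convex X" "affine_on X u"
    and x: "x1 \<in> X" "x2 \<in> X" "u x1 < u x2"
    and indiv: "\<forall>i\<in>I. bewley_rep \<Sigma> X (pr i) u (C i)"
    and soc: "bewley_on_constants \<Sigma> X pr0 u C0" "compact C0" "fconvex C0" "C0 \<subseteq> fa_probs \<Sigma>"
  shows "(\<forall>f\<in>simple_acts \<Sigma> X. \<forall>x\<in>X.
            (\<exists>i\<in>I. incomp (pr i) f (\<lambda>_. x)) \<longrightarrow> incomp pr0 f (\<lambda>_. x))
           \<longleftrightarrow> fconvex_hull (\<Union>i\<in>I. C i) \<subseteq> C0" (is "?caution \<longleftrightarrow> _")
proof -
  note indiv_const = bewley_rep_bewley_on_constants[OF alg indiv[rule_format]]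
  have "fconvex_hull (\<Union>i\<in>I. C i) \<subseteq> C0 \<longleftrightarrow> (\<forall>i\<in>I. C i \<subseteq> C0)"
    using fconvex_hull_minimal[OF _ soc(3)] fconvex_hull_subset[of "\<Union>i\<in>I. C i"]
    by (simp add: UN_subset_iff[symmetric]) blast
  also have "\<dots> \<longleftrightarrow> ?caution"
  proof
    assume "\<forall>i\<in>I. C i \<subseteq> C0"
    then show ?caution using incomp_const_mono[OF indiv_const soc(1)] by blast
  next
    assume caution: ?caution
    show "\<forall>i\<in>I. C i \<subseteq> C0"
    proof (intro ballI subsetI)
      fix i p assume "i \<in> I" "p \<in> C i"
      show "p \<in> C0"
      proof (rule ccontr)
        assume "p \<notin> C0"
        moreover have "p \<in> fa_probs \<Sigma>"
          using bewley_rep_fa_probs[OF indiv[rule_format]] \<open>i \<in> I\<close> \<open>p \<in> C i\<close> by blast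
        ultimately obtain f x0 where f: "f \<in> simple_acts \<Sigma> X" and "x0 \<in> X"
          and "eu p u f = u x0" and above: "\<forall>q\<in>C0. u x0 < eu q u f"
          using separating_act[OF alg X x soc(2-4)] by blast
        have "incomp (pr i) f (\<lambda>_. x0)"
          unfolding incomp_const_iff[OF indiv_const[OF \<open>i \<in> I\<close>] f \<open>x0 \<in> X\<close>]
          using \<open>p \<in> C i\<close> \<open>eu p u f = u x0\<close> by (metis order_refl)
        then have "incomp pr0 f (\<lambda>_. x0)" using caution f \<open>x0 \<in> X\<close> \<open>i \<in> I\<close> by blast
        then obtain q where "q \<in> C0" "eu q u f \<le> u x0"
          unfolding incomp_const_iff[OF soc(1) f \<open>x0 \<in> X\<close>] by blast
        with above show False by fastforce
      qed
    qed
  qed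
  finally show ?thesis by (rule sym)
qed

theorem proposition3:
  fixes \<Sigma> :: "'a set set" and X :: "'b::real_vector set" and u :: "'b \<Rightarrow> real"
    and n :: nat and pr :: "nat \<Rightarrow> ('a,'b) pref"
    and C :: "nat \<Rightarrow> ('a set \<Rightarrow> real) set"
  assumes alg: "algebra UNIV \<Sigma>"
    and convX: "convex X" and nonsingX: "\<exists>x\<in>X. \<exists>y\<in>X. x \<noteq> y"
    and u_aff: "affine_on X u" and u_nonconst: "\<exists>x\<in>X. \<exists>y\<in>X. u x \<noteq> u y"
    and indiv: "\<forall>i\<in>{1..n}. unique_bewley_rep \<Sigma> X (pr i) u (C i)"
    and soc: "unique_hp_rep \<Sigma> X (pr 0) u (C 0) (C 0) \<or> unique_bewley_rep \<Sigma> X (pr 0) u (C 0)"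
  shows "((\<forall>f\<in>simple_acts \<Sigma> X. \<forall>g\<in>simple_acts \<Sigma> X.
              (\<forall>i\<in>{1..n}. pr i f g) \<longrightarrow> pr 0 f g)
           \<longleftrightarrow> C 0 \<subseteq> fconvex_hull (\<Union>i\<in>{1..n}. C i))
       \<and> ((\<forall>f\<in>simple_acts \<Sigma> X. \<forall>x\<in>X.
              (\<exists>i\<in>{1..n}. incomp (pr i) f (\<lambda>_. x)) \<longrightarrow> incomp (pr 0) f (\<lambda>_. x))
           \<longleftrightarrow> fconvex_hull (\<Union>i\<in>{1..n}. C i) \<subseteq> C 0)
       \<and> ((\<forall>f\<in>simple_acts \<Sigma> X. \<forall>g\<in>simple_acts \<Sigma> X.
              (\<forall>i\<in>{1..n}. pr i f g) \<longrightarrow> pr 0 f g)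
          \<and> (\<forall>f\<in>simple_acts \<Sigma> X. \<forall>x\<in>X.
              (\<exists>i\<in>{1..n}. incomp (pr i) f (\<lambda>_. x)) \<longrightarrow> incomp (pr 0) f (\<lambda>_. x))
          \<longrightarrow> C 0 = fconvex_hull (\<Union>i\<in>{1..n}. C i))"
proof -
  obtain x1 x2 where x: "x1 \<in> X" "x2 \<in> X" "u x1 < u x2"
    using u_nonconst by (metis linorder_neqE_linordered_idom)
  have indiv_rep: "\<forall>i\<in>{1..n}. bewley_rep \<Sigma> X (pr i) u (C i)"
    using indiv unfolding unique_bewley_rep_def by blast
  have "hp_rep \<Sigma> X (pr 0) u (C 0) (C 0) \<or> bewley_rep \<Sigma> X (pr 0) u (C 0)"
    using soc unfolding unique_hp_rep_def unique_bewley_rep_def by blast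
  note soc_rep = hp_or_bewley_rep_properties[OF alg this]
  note pareto =
    pareto_iff_subset_hull[OF alg convX u_aff x finite_atLeastAtMost indiv_rep soc_rep(1,2,5)]
  note caution = caution_iff_hull_subset[OF alg convX u_aff x indiv_rep soc_rep(1,3,4,5)]
  show ?thesis unfolding pareto caution by blast
qed

end
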